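(* Let $M>0$, $\mu>0$, $m\in\mathbb{Z}\setminus\{0\}$, $n\in\{0,1,2,\dots\}$ and $l\in\{|m|,|m|+1,\dots\}$, and put $\alpha=\frac{m}{\mu M}$, $\beta=6-\frac{l(l+1)}{\mu^2M^2}$. Suppose $4<\alpha^2<6$ and $\frac{4}{100}<\beta<\frac{165}{100}$. For $a\in(0,M)$ define the polynomial $$p_a(w)=w^4+\frac{\frac{ma}{M}-i(2n+1)\sqrt{1-\frac{a^2}{M^2}}}{\mu M}\,w(w^2-1)+\left[2-\frac{l(l+1)}{\mu^2M^2}\right]w^2+3+2\sqrt{1-\frac{a^2}{M^2}},\quad w\in\mathbb{C}.$$ Then there exists $a_0\in(0,M)$ such that for every $a\in(a_0,M)$ (i.e. for $a$ sufficiently close to $M$), $p_a$ has a root in $\{w\in\mathbb{C}:|w|<1,\ \mathrm{Im}(w)<0\}$. *)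

theory Defs
  imports "HOL-Analysis.Analysis"
begin

definition pa :: "real \<Rightarrow> real \<Rightarrow> int \<Rightarrow> nat \<Rightarrow> nat \<Rightarrow> real \<Rightarrow> complex \<Rightarrow> complex" where
  "pa M \<mu> m n l a w =
     w ^ 4
     + ((complex_of_real (real_of_int m * a / M)
          - \<i> * complex_of_real ((2 * real n + 1) * sqrt (1 - a\<^sup>2 / M\<^sup>2)))
        / complex_of_real (\<mu> * M)) * w * (w\<^sup>2 - 1)
     + complex_of_real (2 - real l * (real l + 1) / (\<mu>\<^sup>2 * M\<^sup>2)) * w\<^sup>2
     + complex_of_real (3 + 2 * sqrt (1 - a\<^sup>2 / M\<^sup>2))"

end

theory Submission
  imports Defs "HOL-Computational_Algebra.Fundamental_Theorem_Algebra"
begin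

(* At a = M the quartic is w^4 + alpha w (w^2 - 1) + (beta - 4) w^2 + 3. We factor it as
   (w^2 + s w + t) (w^2 + (alpha - s) w + 3/t); matching coefficients reduces to one real equation
   in t, and the intermediate value theorem yields a solution t in (0,1) for which the first
   factor has non-real roots. These have modulus sqrt t < 1, and one lies in the lower half plane.
   For a near M the value of p_a at that root is small, and a monic polynomial of degree d with
   |p(w0)| < r^d has a root within distance r of w0, since |p(w0)| is the product of the distances
   from w0 to the roots. *)

lemma poly_root_in_ball:
  fixes p :: "complex poly"
  assumes "degree p > 0" "0 \<le> r" and small: "cmod (poly p w) < cmod (lead_coeff p) * r ^ degree p"
  shows "\<exists>z\<in>ball w r. poly p z = 0"
proof -
  obtain root where decomp: "smult (lead_coeff p) (\<Prod>i<degree p. [:-root i, 1:]) = p"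
    using complex_poly_decompose' by blast
  define d where "d i = cmod (w - root i)" for i
  have "Min (d ` {..<degree p}) \<in> d ` {..<degree p}"
    using assms(1) by (intro Min_in) auto
  then obtain i0 where i0: "i0 < degree p" "d i0 = Min (d ` {..<degree p})"
    by auto
  then have d_min: "d i0 \<le> d i" if "i < degree p" for i
    using that by simp
  have "cmod (lead_coeff p) * d i0 ^ degree p = cmod (lead_coeff p) * (\<Prod>i<degree p. d i0)"
    by simp
  also have "\<dots> \<le> cmod (lead_coeff p) * (\<Prod>i<degree p. d i)"
    using d_min by (intro mult_left_mono prod_mono) (auto simp: d_def)
  also have "\<dots> = cmod (poly p w)"
    by (subst decomp [symmetric]) (simp add: poly_prod d_def norm_mult prod_norm)
  finally have "cmod (lead_coeff p) * d i0 ^ degree p < cmod (lead_coeff p) * r ^ degree p"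
    using small by linarith
  then have "d i0 ^ degree p < r ^ degree p"
    by (rule mult_left_less_imp_less) simp
  then have "d i0 < r"
    using \<open>0 \<le> r\<close> by (rule power_less_imp_less_base)
  moreover have "poly p (root i0) = 0"
    using i0(1) by (subst decomp [symmetric]) (auto simp: poly_prod)
  ultimately show ?thesis
    by (auto simp: d_def dist_norm)
qed

lemma quadratic_root_in_lower_half_disc:
  fixes s t :: real
  assumes "s^2 < 4 * t" "t < 1"
  shows "\<exists>w. w^2 + of_real s * w + of_real t = 0 \<and> cmod w < 1 \<and> Im w < 0"
proof -
  define r where "r = sqrt (4 * t - s^2)"
  have r: "r > 0" "r^2 = 4 * t - s^2"
    using assms(1) by (auto simp: r_def)
  define w where "w = Complex (- s / 2) (- r / 2)"
  have "w^2 + of_real s * w + of_real t = 0"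
    using r(2) by (simp add: complex_eq_iff w_def power2_eq_square algebra_simps)
  moreover have "cmod w = sqrt t"
    using r(2) by (simp add: w_def cmod_def power_divide field_simps)
  then have "cmod w < 1"
    using assms by simp
  moreover have "Im w < 0"
    using r(1) by (simp add: w_def)
  ultimately show ?thesis
    by blast
qed

lemma ball_subset_lower_half_disc:
  assumes "cmod w0 < 1" "Im w0 < 0"
  shows "ball w0 (min (1 - cmod w0) (- Im w0)) \<subseteq> {w. cmod w < 1 \<and> Im w < 0}"
proof
  fix w assume "w \<in> ball w0 (min (1 - cmod w0) (- Im w0))"
  then have "cmod (w - w0) < 1 - cmod w0" "cmod (w - w0) < - Im w0"
    by (auto simp: dist_norm norm_minus_commute)
  moreover have "cmod w \<le> cmod w0 + cmod (w - w0)"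
    using norm_triangle_ineq2[of w w0] by simp
  moreover have "Im w \<le> Im w0 + cmod (w - w0)"
    using abs_Im_le_cmod[of "w - w0"] by simp
  ultimately show "w \<in> {w. cmod w < 1 \<and> Im w < 0}"
    by simp
qed

(* With s = -alpha t (1 + t) / (3 - t^2) the w-coefficients of the factorization match; then, for
   A = alpha^2 and b = beta, factor_defect A b t is t (3 - t^2)^2 times the mismatch of the
   w^2-coefficients, and factor_discr A t < 0 iff s^2 < 4 t. *)
definition factor_discr :: "real \<Rightarrow> real \<Rightarrow> real" where
  "factor_discr A t = A * t * (1 + t)^2 - 4 * (3 - t^2)^2"

definition factor_defect :: "real \<Rightarrow> real \<Rightarrow> real \<Rightarrow> real" where
  "factor_defect A b t =
     A * t^3 * (1 + t)^2 + A * t^2 * (1 + t) * (3 - t^2) + (b - 4 - t) * t * (3 - t^2)^2 - 3 * (3 - t^2)^2"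

lemma factor_defect_eq:
  "factor_defect A b t * (1 + t) =
     factor_discr A t * (t^2 + 3 * t) + (3 - t^2)^2 * (b * t * (1 + t) - (1 - t)^2 * (t + 3))"
  unfolding factor_defect_def factor_discr_def
  by (simp add: algebra_simps power2_eq_square power3_eq_cube)

lemma factor_discr_strict_mono:
  assumes "A > 0" "0 \<le> x" "x < y" "y \<le> 1"
  shows "factor_discr A x < factor_discr A y"
proof -
  have "x * (1 + x)^2 < y * (1 + y)^2"
    using assms by (intro mult_strict_mono power_strict_mono) auto
  then have "A * x * (1 + x)^2 < A * y * (1 + y)^2"
    using assms by (simp add: mult.assoc)
  moreover have "(3 - y^2)^2 < (3 - x^2)^2"
    using assms power_strict_mono[of x y 2] power_le_one[of y 2] by (intro power_strict_mono) auto
  ultimately show ?thesis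
    unfolding factor_discr_def by linarith
qed

lemma factor_discr_root:
  assumes "4 < A" "A < 6"
  shows "\<exists>t. 89/100 < t \<and> t < 1 \<and> factor_discr A t = 0"
proof -
  have neg: "factor_discr A (89/100) < 0" and pos: "factor_discr A 1 > 0"
    using assms by (simp_all add: factor_discr_def power2_eq_square)
  moreover have "continuous_on {89/100..1} (factor_discr A)"
    unfolding factor_discr_def by (intro continuous_intros)
  ultimately obtain t where t: "89/100 \<le> t" "t \<le> 1" "factor_discr A t = 0"
    using IVT'[of "factor_discr A" "89/100" 0 1] by auto
  moreover have "t \<noteq> 89/100" "t \<noteq> 1"
    using neg pos t(3) by (metis less_irrefl)+
  ultimately have "89/100 < t" "t < 1"
    by auto
  with t(3) show ?thesis
    by blast
qed

lemma factor_defect_pos_at_discr_root: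
  assumes "factor_discr A t = 0" "89/100 < t" "t < 1" "4/100 < b"
  shows "factor_defect A b t > 0"
proof -
  have "(1 - t)^2 * (t + 3) < (11/100)^2 * 4"
    using assms by (intro mult_strict_mono power_strict_mono) auto
  moreover have "4/100 * (89/100) * (1 + 89/100) < b * t * (1 + t)"
    using assms by (intro mult_strict_mono) auto
  ultimately have "b * t * (1 + t) - (1 - t)^2 * (t + 3) > 0"
    by (simp add: power2_eq_square)
  moreover have "(3 - t^2)^2 > 0"
    using assms power_le_one[of t 2] by simp
  ultimately have "factor_defect A b t * (1 + t) > 0"
    using factor_defect_eq[of A b t] assms(1) by simp
  then show ?thesis
    using assms(2) by (simp add: zero_less_mult_iff)
qed

lemma ex_factor_param:
  assumes "4 < A" "A < 6" "4/100 < b"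
  shows "\<exists>t. 0 < t \<and> t < 1 \<and> factor_defect A b t = 0 \<and> factor_discr A t < 0"
proof -
  obtain t1 where t1: "89/100 < t1" "t1 < 1" "factor_discr A t1 = 0"
    using factor_discr_root assms by blast
  have defect_pos: "factor_defect A b t1 > 0"
    using factor_defect_pos_at_discr_root t1 assms by blast
  moreover have "factor_defect A b 0 < 0"
    by (simp add: factor_defect_def)
  moreover have "continuous_on {0..t1} (factor_defect A b)"
    unfolding factor_defect_def by (intro continuous_intros)
  ultimately obtain t where t: "0 \<le> t" "t \<le> t1" "factor_defect A b t = 0"
    using IVT'[of "factor_defect A b" 0 0 t1] t1 by auto
  then have "0 < t" "t < t1"
    using defect_pos by (auto simp: factor_defect_def intro: le_neq_trans)
  then have "factor_discr A t < 0"
    using factor_discr_strict_mono[of A t t1] t1 assms by auto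
  then show ?thesis
    using \<open>0 < t\<close> \<open>t < t1\<close> t t1 by auto
qed

lemma factor_discr_negD:
  assumes "0 < t" "t < 1" "factor_discr (\<alpha>^2) t < 0"
  shows "(\<alpha> * t * (1 + t) / (3 - t^2))^2 < 4 * t"
proof -
  have d: "3 - t^2 > 0"
    using assms power_le_one[of t 2] by simp
  have "(\<alpha> * t * (1 + t) / (3 - t^2))^2 = t * (\<alpha>^2 * t * (1 + t)^2) / (3 - t^2)^2"
    by (simp add: power_divide power_mult_distrib power2_eq_square)
  also have "\<dots> < t * (4 * (3 - t^2)^2) / (3 - t^2)^2"
    using assms d by (intro divide_strict_right_mono mult_strict_left_mono) (auto simp: factor_discr_def)
  also have "\<dots> = 4 * t"
    using d by simp
  finally show ?thesis .
qed

lemma limit_quartic_factor: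
  fixes \<alpha> \<beta> t :: real and w :: complex
  assumes "0 < t" "t < 1" "factor_defect (\<alpha>^2) \<beta> t = 0"
  defines "s \<equiv> - \<alpha> * t * (1 + t) / (3 - t^2)"
  shows "w^4 + of_real \<alpha> * w * (w^2 - 1) + of_real (\<beta> - 4) * w^2 + 3 =
         (w^2 + of_real s * w + of_real t) * (w^2 + of_real (\<alpha> - s) * w + of_real (3 / t))"
proof -
  have d: "3 - t^2 > 0"
    using assms power_le_one[of t 2] by simp
  have sd: "s * (3 - t^2) = - \<alpha> * t * (1 + t)"
    using d by (simp add: s_def)
  have "t * (3 - t^2)^2 * (t + 3 / t + s * (\<alpha> - s) - (\<beta> - 4)) =
        t^2 * (3 - t^2)^2 + 3 * (3 - t^2)^2 + \<alpha> * t * (3 - t^2) * (s * (3 - t^2))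
          - t * (s * (3 - t^2))^2 - (\<beta> - 4) * t * (3 - t^2)^2"
    using assms(1) by (simp add: field_simps power2_eq_square)
  also have "\<dots> = - factor_defect (\<alpha>^2) \<beta> t"
    unfolding sd factor_defect_def by (simp add: algebra_simps power2_eq_square power3_eq_cube)
  finally have w2: "t + 3 / t + s * (\<alpha> - s) = \<beta> - 4"
    using assms d by simp
  have "3 * s / t + t * (\<alpha> - s) = (s * (3 - t^2) + \<alpha> * t^2) / t"
    using assms(1) by (simp add: field_simps power2_eq_square)
  also have "\<dots> = - \<alpha>"
    unfolding sd using assms(1) by (simp add: field_simps power2_eq_square)
  finally have w1: "3 * s / t + t * (\<alpha> - s) + \<alpha> = 0"
    by simp
  have "(w^2 + of_real s * w + of_real t) * (w^2 + of_real (\<alpha> - s) * w + of_real (3 / t)) =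
        w^4 + of_real \<alpha> * w * (w^2 - 1) + of_real (t + 3 / t + s * (\<alpha> - s)) * w^2
          + of_real (3 * s / t + t * (\<alpha> - s) + \<alpha>) * w + of_real (t * (3 / t))"
    by (simp add: algebra_simps power2_eq_square power3_eq_cube power4_eq_xxxx)
  then show ?thesis
    using assms(1) by (simp add: w1 w2)
qed

lemma limit_quartic_root:
  fixes \<alpha> \<beta> :: real
  assumes "4 < \<alpha>^2" "\<alpha>^2 < 6" "4/100 < \<beta>"
  shows "\<exists>w. w^4 + of_real \<alpha> * w * (w^2 - 1) + of_real (\<beta> - 4) * w^2 + 3 = 0
              \<and> cmod w < 1 \<and> Im w < 0"
proof -
  obtain t where t: "0 < t" "t < 1" "factor_defect (\<alpha>^2) \<beta> t = 0" "factor_discr (\<alpha>^2) t < 0"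
    using ex_factor_param assms by blast
  define s where "s = - \<alpha> * t * (1 + t) / (3 - t^2)"
  have "s^2 < 4 * t"
    using factor_discr_negD[OF t(1,2,4)] by (simp add: s_def power2_eq_square)
  then obtain w where w: "w^2 + of_real s * w + of_real t = 0" "cmod w < 1" "Im w < 0"
    using quadratic_root_in_lower_half_disc t(2) by blast
  then show ?thesis
    using limit_quartic_factor[OF t(1-3), of w] by (auto simp: s_def)
qed

lemma isCont_pa: "isCont (\<lambda>a. pa M \<mu> m n l a w) x"
  unfolding pa_def divide_inverse by (intro continuous_intros)

lemma pa_eventually_small:
  assumes "pa M \<mu> m n l M w = 0" "\<epsilon> > 0"
  shows "eventually (\<lambda>a. cmod (pa M \<mu> m n l a w) < \<epsilon>) (at_left M)"
proof -
  have "(\<lambda>a. pa M \<mu> m n l a w) \<midarrow>M\<rightarrow> 0"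
    using isContD[OF isCont_pa[of M M \<mu> m n l w]] assms(1) by simp
  then have "((\<lambda>a. cmod (pa M \<mu> m n l a w)) \<longlongrightarrow> 0) (at_left M)"
    using tendsto_norm_zero tendsto_within_subset[OF _ subset_UNIV] by blast
  then show ?thesis
    using assms(2) by (rule order_tendstoD(2))
qed

lemma pa_monic_quartic: "\<exists>P. lead_coeff P = 1 \<and> degree P = 4 \<and> poly P = pa M \<mu> m n l a"
proof -
  define e where "e = sqrt (1 - a\<^sup>2 / M\<^sup>2)"
  define c where "c = (complex_of_real (real_of_int m * a / M)
      - \<i> * complex_of_real ((2 * real n + 1) * e)) / complex_of_real (\<mu> * M)"
  define B where "B = complex_of_real (2 - real l * (real l + 1) / (\<mu>\<^sup>2 * M\<^sup>2))"
  define P where "P = [: 3 + 2 * of_real e, - c, B, c, 1 :]"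
  have "pa M \<mu> m n l a w = w^4 + c * w * (w^2 - 1) + B * w^2 + (3 + 2 * of_real e)" for w
    unfolding pa_def c_def e_def B_def by simp
  moreover have "poly P w = w^4 + c * w * (w^2 - 1) + B * w^2 + (3 + 2 * of_real e)" for w
    unfolding P_def by (simp add: algebra_simps power2_eq_square power3_eq_cube power4_eq_xxxx)
  moreover have "lead_coeff P = 1" "degree P = 4"
    by (simp_all add: P_def)
  ultimately show ?thesis
    by (metis ext)
qed

lemma pa_root_in_lower_half_disc:
  assumes "cmod w0 < 1" "Im w0 < 0"
    and small: "cmod (pa M \<mu> m n l a w0) < (min (1 - cmod w0) (- Im w0)) ^ 4"
  shows "\<exists>w. pa M \<mu> m n l a w = 0 \<and> cmod w < 1 \<and> Im w < 0"
proof -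
  define r where "r = min (1 - cmod w0) (- Im w0)"
  obtain P where P: "lead_coeff P = 1" "degree P = 4" "poly P = pa M \<mu> m n l a"
    using pa_monic_quartic by blast
  then have "\<exists>z\<in>ball w0 r. poly P z = 0"
    using small assms(1,2) by (intro poly_root_in_ball) (simp_all add: r_def)
  then show ?thesis
    using ball_subset_lower_half_disc[OF assms(1,2)] P(3) unfolding r_def by auto
qed

lemma pa_at_M:
  assumes "M \<noteq> 0"
  shows "pa M \<mu> m n l M w =
    w^4 + of_real (real_of_int m / (\<mu> * M)) * w * (w^2 - 1)
      + of_real (2 - real l * (real l + 1) / (\<mu>\<^sup>2 * M\<^sup>2)) * w^2 + 3"
  using assms unfolding pa_def by simp

theorem mainTheorem5:
  fixes M \<mu> :: real and m :: int and n l :: nat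
  assumes "M > 0" and "\<mu> > 0" and "m \<noteq> 0"
    and "l \<ge> nat \<bar>m\<bar>"
    and "4 < (real_of_int m / (\<mu> * M))\<^sup>2" and "(real_of_int m / (\<mu> * M))\<^sup>2 < 6"
    and "4/100 < 6 - real l * (real l + 1) / (\<mu>\<^sup>2 * M\<^sup>2)"
    and "6 - real l * (real l + 1) / (\<mu>\<^sup>2 * M\<^sup>2) < 165/100"
  shows "\<exists>a0. 0 < a0 \<and> a0 < M \<and>
           (\<forall>a. a0 < a \<and> a < M \<longrightarrow>
              (\<exists>w. pa M \<mu> m n l a w = 0 \<and> cmod w < 1 \<and> Im w < 0))"
proof -
  obtain w0 where w0: "pa M \<mu> m n l M w0 = 0" "cmod w0 < 1" "Im w0 < 0"
    using limit_quartic_root[of "real_of_int m / (\<mu> * M)" "6 - real l * (real l + 1) / (\<mu>\<^sup>2 * M\<^sup>2)"]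
      assms(1,5-7) by (auto simp: pa_at_M)
  have "eventually (\<lambda>a. cmod (pa M \<mu> m n l a w0) < (min (1 - cmod w0) (- Im w0)) ^ 4) (at_left M)"
    using w0 by (intro pa_eventually_small) simp_all
  then obtain a1 where "a1 < M"
    and "\<And>a. a1 < a \<Longrightarrow> a < M \<Longrightarrow> cmod (pa M \<mu> m n l a w0) < (min (1 - cmod w0) (- Im w0)) ^ 4"
    by (auto simp: eventually_at_left_field)
  then show ?thesis
    using pa_root_in_lower_half_disc[OF w0(2,3)] assms(1)
    by (intro exI[of _ "max a1 (M / 2)"]) auto
qed

end
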